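(* Let $P$ be a finite poset and $\epsilon$ the covering-relation labeling induced by a labeling of $P$. Suppose that $\Omega(P,\epsilon;t)=\Omega(P,-\epsilon;t+s)$ for some $s\in\mathbb{Z}$. Then $-r(-\epsilon)\le s\le r(\epsilon)$. Moreover $s=r(\epsilon)$ holds if and only if $P$ is $\epsilon$-graded, and $s=-r(-\epsilon)$ holds if and only if $P$ is $\epsilon$-graded.
   Context: $P$ has $p$ elements, $\omega:P\to\{1,\dots,p\}$ a bijection; write $x\prec y$ if $y$ covers $x$, $\epsilon(x,y)=1$ if $\omega(x)<\omega(y)$, $-1$ otherwise; $-\epsilon$ is $(-\epsilon)(x,y)=-\epsilon(x,y)$ (induced by $p+1-\omega$). A $(P,\epsilon)$-partition is an order-reversing map $\sigma:P\to\{1,2,\dots\}$ with $\sigma(x)>\sigma(y)$ whenever $x\prec y$ and $\epsilon(x,y)=-1$; $\Omega(P,\epsilon;n)$ is the number of such with largest part at most $n$ (a polynomial in $n$). $r(\epsilon)=\max\sum_{i=1}^\ell\epsilon(x_{i-1},x_i)$ over all maximal chains $x_0\prec\cdots\prec x_\ell$ of $P$, and similarly for $r(-\epsilon)$. $P$ is $\epsilon$-graded if this sum is the same for all maximal chains. *)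

theory Defs
  imports "HOL-Computational_Algebra.Polynomial"
begin

text \<open>The finite poset P is the (finite, nonempty) type 'a with its order.
  y covers x:\<close>
definition covers :: "'a::order \<Rightarrow> 'a \<Rightarrow> bool" where
  "covers x y \<longleftrightarrow> x < y \<and> \<not> (\<exists>z. x < z \<and> z < y)"

definition eps_of :: "('a \<Rightarrow> nat) \<Rightarrow> 'a \<Rightarrow> 'a \<Rightarrow> int" where
  "eps_of \<omega> x y = (if \<omega> x < \<omega> y then 1 else -1)"

definition neg_lab :: "('a \<Rightarrow> 'a \<Rightarrow> int) \<Rightarrow> 'a \<Rightarrow> 'a \<Rightarrow> int" where
  "neg_lab e x y = - e x y"

definition is_partition :: "('a::order \<Rightarrow> 'a \<Rightarrow> int) \<Rightarrow> ('a \<Rightarrow> nat) \<Rightarrow> bool" where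
  "is_partition e \<sigma> \<longleftrightarrow> (\<forall>x. 1 \<le> \<sigma> x) \<and> (\<forall>x y. x \<le> y \<longrightarrow> \<sigma> y \<le> \<sigma> x)
     \<and> (\<forall>x y. covers x y \<and> e x y = -1 \<longrightarrow> \<sigma> y < \<sigma> x)"

definition Omega_count :: "('a::order \<Rightarrow> 'a \<Rightarrow> int) \<Rightarrow> nat \<Rightarrow> nat" where
  "Omega_count e n = card {\<sigma>. is_partition e \<sigma> \<and> (\<forall>x. \<sigma> x \<le> n)}"

definition Omega :: "('a::order \<Rightarrow> 'a \<Rightarrow> int) \<Rightarrow> real poly" where
  "Omega e = (THE q. \<forall>n::nat. 1 \<le> n \<longrightarrow> poly q (real n) = real (Omega_count e n))"

definition max_chain :: "'a::order list \<Rightarrow> bool" where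
  "max_chain xs \<longleftrightarrow> xs \<noteq> [] \<and> (\<forall>i. Suc i < length xs \<longrightarrow> covers (xs ! i) (xs ! Suc i))
     \<and> (\<forall>z. \<not> z < hd xs) \<and> (\<forall>z. \<not> last xs < z)"

definition chain_sum :: "('a \<Rightarrow> 'a \<Rightarrow> int) \<Rightarrow> 'a list \<Rightarrow> int" where
  "chain_sum e xs = (\<Sum>i | Suc i < length xs. e (xs ! i) (xs ! Suc i))"

definition rank :: "('a::order \<Rightarrow> 'a \<Rightarrow> int) \<Rightarrow> int" where
  "rank e = Max {chain_sum e xs | xs. max_chain xs}"

definition graded :: "('a::order \<Rightarrow> 'a \<Rightarrow> int) \<Rightarrow> bool" where
  "graded e \<longleftrightarrow> (\<exists>c. \<forall>xs. max_chain xs \<longrightarrow> chain_sum e xs = c)"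

end

theory Submission
  imports Defs
begin

text \<open>
  Let \<open>r = r(\<epsilon>)\<close> and let \<open>h x\<close> be the largest \<open>\<epsilon>\<close>-weight of a saturated chain from \<open>x\<close> up to
  a maximal element. Then \<open>h\<close> vanishes on maximal elements, is at most \<open>r\<close> on minimal ones, and
  \<open>h x \<ge> \<epsilon>(x,y) + h y\<close> whenever \<open>y\<close> covers \<open>x\<close>; hence \<open>\<sigma> \<mapsto> \<sigma> + h\<close> embeds the
  \<open>(P,\<epsilon>)\<close>-partitions with parts at most \<open>N\<close> into the \<open>(P,-\<epsilon>)\<close>-partitions with parts at
  most \<open>N + r\<close>. Counts of partitions are strictly increasing in \<open>N\<close> once \<open>N \<ge> |P|\<close>, so
  \<open>\<Omega>(P,\<epsilon>;N) = \<Omega>(P,-\<epsilon>;N+s)\<close> for large \<open>N\<close> forces \<open>s \<le> r\<close>. If \<open>P\<close> is not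
  \<open>\<epsilon>\<close>-graded, some minimal element has \<open>h < r\<close> or some cover has \<open>h x > \<epsilon>(x,y) + h y\<close>,
  and in either case a suitable \<open>(P,-\<epsilon>)\<close>-partition misses the image, so \<open>s \<noteq> r\<close>.
  The same argument for \<open>-\<epsilon>\<close> and \<open>-s\<close> gives the lower bound, and for graded \<open>P\<close> the
  identity \<open>r(-\<epsilon>) = -r(\<epsilon>)\<close> closes the gap. The polynomial \<open>\<Omega>\<close> is well defined because
  the count is \<open>\<Sum>\<^sub>j (n choose j) a\<^sub>j\<close>, with \<open>a\<^sub>j\<close> the number of partitions onto a
  \<open>j\<close>-element chain.
\<close>

section \<open>Saturated chains in finite posets\<close>

lemma covers_exists_below:
  fixes x z :: "'a::{order,finite}"
  assumes "x < z"
  obtains y where "covers x y" "y \<le> z"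
proof -
  obtain y where "y \<in> {v. x < v \<and> v \<le> z}" "\<forall>v \<in> {v. x < v \<and> v \<le> z}. v \<le> y \<longrightarrow> y = v"
    using finite_has_minimal[of "{v. x < v \<and> v \<le> z}"] assms by auto
  then show ?thesis
    using that unfolding covers_def by (metis dual_order.strict_trans2 less_le mem_Collect_eq)
qed

lemma less_imp_trancl_covers:
  fixes x y :: "'a::{order,finite}"
  assumes "x < y"
  shows "(x, y) \<in> {(a, b). covers a b}\<^sup>+"
  using assms
proof (induction "card {v. x < v \<and> v < y}" arbitrary: x rule: less_induct)
  case less
  obtain w where w: "covers x w" "w \<le> y"
    using covers_exists_below less.prems by blast
  show ?case
  proof (cases "w = y")
    case True
    then show ?thesis using w by auto
  next
    case False
    with w have "x < w" "w < y" by (auto simp: covers_def)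
    then have "{v. w < v \<and> v < y} \<subset> {v. x < v \<and> v < y}" by auto
    then have "card {v. w < v \<and> v < y} < card {v. x < v \<and> v < y}"
      by (simp add: psubset_card_mono)
    then have "(w, y) \<in> {(a, b). covers a b}\<^sup>+" using less.hyps \<open>w < y\<close> by blast
    then show ?thesis using w(1) by (simp add: trancl_into_trancl2)
  qed
qed

lemma ex_maximal_above:
  fixes x :: "'a::{order,finite}"
  obtains M where "x \<le> M" "\<forall>z. \<not> M < z"
  using finite_has_maximal2[of UNIV x] by (auto simp: less_le)

lemma ex_minimal_below:
  fixes x :: "'a::{order,finite}"
  obtains m where "m \<le> x" "\<forall>z. \<not> z < m"
  using finite_has_minimal2[of UNIV x] by (auto simp: less_le)

fun saturated :: "'a::order list \<Rightarrow> bool" where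
  "saturated (x # y # zs) \<longleftrightarrow> covers x y \<and> saturated (y # zs)"
| "saturated _ \<longleftrightarrow> True"

lemma saturated_iff_nth:
  "saturated xs \<longleftrightarrow> (\<forall>i. Suc i < length xs \<longrightarrow> covers (xs ! i) (xs ! Suc i))"
proof (induction xs rule: saturated.induct)
  case (1 x y zs)
  then show ?case by (simp add: All_less_Suc2)
qed auto

lemma max_chain_iff_saturated:
  "max_chain xs \<longleftrightarrow> xs \<noteq> [] \<and> saturated xs \<and> (\<forall>z. \<not> z < hd xs) \<and> (\<forall>z. \<not> last xs < z)"
  unfolding max_chain_def saturated_iff_nth by blast

lemma saturated_sorted: "saturated xs \<Longrightarrow> sorted_wrt (<) xs"
  by (induction xs rule: saturated.induct) (auto simp: sorted_wrt2 covers_def)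

lemma sorted_wrt_less_distinct: "sorted_wrt (<) (xs :: 'a::preorder list) \<Longrightarrow> distinct xs"
  by (induction xs) auto

lemma finite_saturated: "finite {xs :: 'a::{order,finite} list. saturated xs}"
  by (rule finite_subset[OF _ finite_subset_distinct[of "UNIV :: 'a set"]])
    (use saturated_sorted sorted_wrt_less_distinct in auto)

lemma chain_sum_Cons_Cons: "chain_sum e (x # y # zs) = e x y + chain_sum e (y # zs)"
proof -
  have "chain_sum e (x # y # zs) = (\<Sum>i<Suc (length zs). e ((x # y # zs) ! i) ((x # y # zs) ! Suc i))"
    unfolding chain_sum_def by (rule sum.cong) auto
  also have "\<dots> = e x y + (\<Sum>i<length zs. e ((y # zs) ! i) ((y # zs) ! Suc i))"
    by (subst sum.lessThan_Suc_shift) simp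
  also have "(\<Sum>i<length zs. e ((y # zs) ! i) ((y # zs) ! Suc i)) = chain_sum e (y # zs)"
    unfolding chain_sum_def by (rule sum.cong) auto
  finally show ?thesis .
qed

lemma chain_sum_singleton: "chain_sum e [x] = 0"
  by (simp add: chain_sum_def)

lemma chain_sum_neg_lab: "chain_sum (neg_lab e) xs = - chain_sum e xs"
  by (simp add: chain_sum_def neg_lab_def sum_negf)

section \<open>The upper rank\<close>

definition upper_chain :: "'a::order \<Rightarrow> 'a list \<Rightarrow> bool" where
  "upper_chain x xs \<longleftrightarrow> saturated (x # xs) \<and> (\<forall>z. \<not> last (x # xs) < z)"

definition upper_rank :: "('a::order \<Rightarrow> 'a \<Rightarrow> int) \<Rightarrow> 'a \<Rightarrow> int" where
  "upper_rank e x = Max {chain_sum e (x # xs) | xs. upper_chain x xs}"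

lemma upper_chain_Cons: "covers x y \<Longrightarrow> upper_chain y ys \<Longrightarrow> upper_chain x (y # ys)"
  by (simp add: upper_chain_def)

lemma upper_chain_exists:
  fixes x :: "'a::{order,finite}"
  shows "\<exists>xs. upper_chain x xs"
proof (induction x rule: measure_induct_rule[where f = "\<lambda>x. card {z. x < z}"])
  case (less x)
  show ?case
  proof (cases "\<exists>z. x < z")
    case False
    then have "upper_chain x []" by (simp add: upper_chain_def)
    then show ?thesis ..
  next
    case True
    then obtain y where y: "covers x y" using covers_exists_below by blast
    then have "{z. y < z} \<subset> {z. x < z}" by (auto simp: covers_def)
    then have "card {z. y < z} < card {z. x < z}" by (simp add: psubset_card_mono)
    then obtain ys where "upper_chain y ys" using less.IH by blast
    then show ?thesis using upper_chain_Cons[OF y] by blast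
  qed
qed

lemma finite_upper_chain_sums:
  "finite {chain_sum e (x # xs) | xs. upper_chain (x::'a::{order,finite}) xs}"
proof -
  have "{chain_sum e (x # xs) | xs. upper_chain x xs} \<subseteq> chain_sum e ` {xs. saturated xs}"
    by (auto simp: upper_chain_def)
  then show ?thesis using finite_saturated finite_subset by blast
qed

lemma upper_rank_attained:
  fixes x :: "'a::{order,finite}"
  obtains xs where "upper_chain x xs" "chain_sum e (x # xs) = upper_rank e x"
proof -
  have "upper_rank e x \<in> {chain_sum e (x # xs) | xs. upper_chain x xs}"
    unfolding upper_rank_def using finite_upper_chain_sums upper_chain_exists by (intro Max_in) auto
  then show ?thesis using that by force
qed

lemma upper_rank_ge: "upper_chain (x::'a::{order,finite}) xs \<Longrightarrow> chain_sum e (x # xs) \<le> upper_rank e x"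
  unfolding upper_rank_def using finite_upper_chain_sums by (intro Max_ge) auto

lemma upper_rank_cover:
  fixes x y :: "'a::{order,finite}"
  assumes "covers x y"
  shows "e x y + upper_rank e y \<le> upper_rank e x"
proof -
  obtain ys where ys: "upper_chain y ys" "chain_sum e (y # ys) = upper_rank e y"
    using upper_rank_attained by blast
  have "chain_sum e (x # y # ys) \<le> upper_rank e x"
    using upper_chain_Cons[OF assms ys(1)] by (rule upper_rank_ge)
  then show ?thesis using ys(2) by (simp add: chain_sum_Cons_Cons)
qed

lemma upper_rank_maximal:
  fixes M :: "'a::{order,finite}"
  assumes "\<forall>z. \<not> M < z"
  shows "upper_rank e M = 0"
proof -
  obtain xs where xs: "upper_chain M xs" "chain_sum e (M # xs) = upper_rank e M"
    using upper_rank_attained by blast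
  have "xs = []"
    using xs(1) assms by (cases xs) (auto simp: upper_chain_def covers_def)
  then show ?thesis using xs(2) by (simp add: chain_sum_singleton)
qed

lemma finite_max_chain_sums: "finite {chain_sum e xs | xs. max_chain (xs::'a::{order,finite} list)}"
proof -
  have "{chain_sum e xs | xs. max_chain (xs::'a list)} \<subseteq> chain_sum e ` {xs. saturated xs}"
    by (auto simp: max_chain_iff_saturated)
  then show ?thesis using finite_saturated finite_subset by blast
qed

lemma max_chain_exists: "\<exists>xs::'a::{order,finite} list. max_chain xs"
proof -
  obtain m :: 'a where "\<forall>z. \<not> z < m" using ex_minimal_below by blast
  moreover obtain xs where "upper_chain m xs" using upper_chain_exists by blast
  ultimately have "max_chain (m # xs)" by (simp add: max_chain_iff_saturated upper_chain_def)
  then show ?thesis ..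
qed

lemma chain_sum_le_rank: "max_chain (xs::'a::{order,finite} list) \<Longrightarrow> chain_sum e xs \<le> rank e"
  unfolding rank_def using finite_max_chain_sums by (intro Max_ge) auto

lemma upper_rank_minimal_le:
  fixes m :: "'a::{order,finite}"
  assumes "\<forall>z. \<not> z < m"
  shows "upper_rank e m \<le> rank e"
proof -
  obtain xs where xs: "upper_chain m xs" "chain_sum e (m # xs) = upper_rank e m"
    using upper_rank_attained by blast
  then have "max_chain (m # xs)" using assms by (simp add: max_chain_iff_saturated upper_chain_def)
  then show ?thesis using xs(2) chain_sum_le_rank by metis
qed

lemma chain_sum_telescope:
  assumes "\<And>a b. covers a b \<Longrightarrow> g a = e a b + g b"
  shows "saturated xs \<Longrightarrow> xs \<noteq> [] \<Longrightarrow> chain_sum e xs = g (hd xs) - g (last xs)"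
proof (induction xs rule: saturated.induct)
  case (1 x y zs)
  then show ?case using assms[of x y] by (simp add: chain_sum_Cons_Cons)
qed (auto simp: chain_sum_singleton)

lemma not_graded_defect:
  fixes e :: "'a::{order,finite} \<Rightarrow> 'a \<Rightarrow> int"
  assumes "\<not> graded e"
  shows "(\<exists>m. (\<forall>z. \<not> z < m) \<and> upper_rank e m < rank e)
    \<or> (\<exists>x y. covers x y \<and> e x y + upper_rank e y < upper_rank e x)"
proof (rule ccontr)
  assume no_defect: "\<not> ?thesis"
  have minimal: "upper_rank e m = rank e" if "\<forall>z. \<not> z < m" for m
    using no_defect upper_rank_minimal_le[of m e] that by fastforce
  have cover: "upper_rank e a = e a b + upper_rank e b" if "covers a b" for a b
    using no_defect upper_rank_cover[of a b e] that by fastforce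
  have "chain_sum e xs = rank e" if "max_chain xs" for xs
  proof -
    from that have "xs \<noteq> []" "saturated xs" "\<forall>z. \<not> z < hd xs" "\<forall>z. \<not> last xs < z"
      by (simp_all add: max_chain_iff_saturated)
    then show ?thesis
      using chain_sum_telescope[of "upper_rank e" e xs, OF cover] minimal upper_rank_maximal by simp
  qed
  then show False using assms unfolding graded_def by blast
qed

lemma graded_neg_lab_iff: "graded (neg_lab e) \<longleftrightarrow> graded e"
  unfolding graded_def chain_sum_neg_lab by (metis minus_minus)

lemma rank_graded:
  assumes "graded e" and "max_chain xs"
  shows "rank e = chain_sum e xs"
proof -
  obtain c where "\<forall>xs. max_chain xs \<longrightarrow> chain_sum e xs = c"
    using assms(1) unfolding graded_def by blast
  then have "{chain_sum e xs | xs. max_chain xs} = {chain_sum e xs}" using assms(2) by auto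
  then show ?thesis unfolding rank_def by simp
qed

lemma rank_neg_lab_graded:
  fixes e :: "'a::{order,finite} \<Rightarrow> 'a \<Rightarrow> int"
  assumes "graded e"
  shows "rank (neg_lab e) = - rank e"
proof -
  obtain xs :: "'a list" where "max_chain xs" using max_chain_exists by blast
  then show ?thesis
    using assms graded_neg_lab_iff rank_graded chain_sum_neg_lab by metis
qed

section \<open>Partitions with values in an arbitrary order\<close>

text \<open>Only the covering conditions of a \<open>(P,e)\<close>-partition; bounds on the values are imposed
  separately, so that integer-valued ones can be shifted by arbitrary integer functions.\<close>

definition cover_compatible :: "('a::order \<Rightarrow> 'a \<Rightarrow> int) \<Rightarrow> ('a \<Rightarrow> 'b::order) \<Rightarrow> bool" where
  "cover_compatible e \<tau> \<longleftrightarrow> (\<forall>x y. covers x y \<longrightarrow> \<tau> y \<le> \<tau> x \<and> (e x y = -1 \<longrightarrow> \<tau> y < \<tau> x))"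

definition bounded_partitions :: "('a::order \<Rightarrow> 'a \<Rightarrow> int) \<Rightarrow> int \<Rightarrow> ('a \<Rightarrow> int) set" where
  "bounded_partitions e N = {\<tau>. cover_compatible e \<tau> \<and> range \<tau> \<subseteq> {1..N}}"

definition num_partitions :: "('a::order \<Rightarrow> 'a \<Rightarrow> int) \<Rightarrow> int \<Rightarrow> nat" where
  "num_partitions e N = card (bounded_partitions e N)"

lemma cover_compatible_antimono:
  fixes x y :: "'a::{order,finite}"
  assumes "cover_compatible e \<tau>" and "x \<le> y"
  shows "\<tau> y \<le> \<tau> x"
proof (cases "x = y")
  case False
  with assms(2) have "(x, y) \<in> {(a, b). covers a b}\<^sup>+" by (simp add: less_imp_trancl_covers)
  then show ?thesis
    by (induction rule: trancl_induct) (use assms(1) in \<open>auto simp: cover_compatible_def intro: order_trans\<close>)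
qed simp

lemma strict_antimono_cover_compatible:
  "(\<And>a b. a < b \<Longrightarrow> \<tau> b < \<tau> a) \<Longrightarrow> cover_compatible e \<tau>"
  by (auto simp: cover_compatible_def covers_def less_imp_le)

lemma finite_maps_into: "finite B \<Longrightarrow> finite {f :: 'a::finite \<Rightarrow> 'b. range f \<subseteq> B}"
  using finite_set_of_finite_funs[of "UNIV :: 'a set" B undefined] by (simp add: image_subset_iff)

lemma finite_bounded_partitions: "finite (bounded_partitions e N :: ('a::{order,finite} \<Rightarrow> int) set)"
  unfolding bounded_partitions_def by (rule finite_subset[OF _ finite_maps_into[of "{1..N}"]]) auto

lemma bounded_partitions_values: "\<tau> \<in> bounded_partitions e N \<Longrightarrow> \<tau> x \<in> {1..N}"
  unfolding bounded_partitions_def by blast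

lemma bounded_partitions_mono: "N \<le> N' \<Longrightarrow> bounded_partitions e N \<subseteq> bounded_partitions e N'"
  unfolding bounded_partitions_def by auto

lemma is_partition_iff_cover_compatible:
  fixes \<sigma> :: "'a::{order,finite} \<Rightarrow> nat"
  shows "is_partition e \<sigma> \<longleftrightarrow> cover_compatible e \<sigma> \<and> (\<forall>x. 1 \<le> \<sigma> x)"
  unfolding is_partition_def using cover_compatible_antimono[of e \<sigma>]
  by (auto simp: cover_compatible_def covers_def)

lemma Omega_count_eq_num_partitions:
  fixes e :: "'a::{order,finite} \<Rightarrow> 'a \<Rightarrow> int"
  shows "Omega_count e n = num_partitions e (int n)"
proof -
  let ?A = "{\<sigma>. is_partition e \<sigma> \<and> (\<forall>x. \<sigma> x \<le> n)}"
  have compatible_int: "cover_compatible e (\<lambda>x. int (\<sigma> x)) \<longleftrightarrow> cover_compatible e \<sigma>"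
    for \<sigma> :: "'a \<Rightarrow> nat"
    by (simp add: cover_compatible_def)
  have int_nat: "(\<lambda>x. int (nat (\<tau> x))) = \<tau>" if "\<tau> \<in> bounded_partitions e (int n)" for \<tau>
  proof
    fix x
    have "\<tau> x \<in> {1..int n}" using that by (rule bounded_partitions_values)
    then show "int (nat (\<tau> x)) = \<tau> x" by simp
  qed
  have "bij_betw (\<lambda>\<sigma> x. int (\<sigma> x)) ?A (bounded_partitions e (int n))"
  proof (rule bij_betw_byWitness[where f' = "\<lambda>\<tau> x. nat (\<tau> x)"])
    show "(\<lambda>\<sigma> x. int (\<sigma> x)) ` ?A \<subseteq> bounded_partitions e (int n)"
      by (auto simp: bounded_partitions_def is_partition_iff_cover_compatible compatible_int)
    show "(\<lambda>\<tau> x. nat (\<tau> x)) ` bounded_partitions e (int n) \<subseteq> ?A"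
    proof clarify
      fix \<tau> assume \<tau>: "\<tau> \<in> bounded_partitions e (int n)"
      then have "cover_compatible e (\<lambda>x. nat (\<tau> x))"
        using compatible_int[of "\<lambda>x. nat (\<tau> x)"] int_nat[OF \<tau>] by (simp add: bounded_partitions_def)
      moreover have "1 \<le> nat (\<tau> x) \<and> nat (\<tau> x) \<le> n" for x
      proof -
        have "\<tau> x \<in> {1..int n}" using \<tau> by (rule bounded_partitions_values)
        then show ?thesis by (simp add: nat_le_iff le_nat_iff)
      qed
      ultimately show "is_partition e (\<lambda>x. nat (\<tau> x)) \<and> (\<forall>x. nat (\<tau> x) \<le> n)"
        by (simp add: is_partition_iff_cover_compatible)
    qed
  qed (simp, use int_nat in blast)
  then show ?thesis unfolding Omega_count_def num_partitions_def by (rule bij_betw_same_card)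
qed

section \<open>Shifting by the upper rank\<close>

definition sign_lab :: "('a \<Rightarrow> 'a \<Rightarrow> int) \<Rightarrow> bool" where
  "sign_lab e \<longleftrightarrow> (\<forall>x y. e x y = 1 \<or> e x y = -1)"

lemma sign_lab_eps_of: "sign_lab (eps_of \<omega>)"
  by (simp add: sign_lab_def eps_of_def)

lemma sign_lab_neg_lab: "sign_lab e \<Longrightarrow> sign_lab (neg_lab e)"
  by (auto simp: sign_lab_def neg_lab_def)

lemma neg_lab_neg_lab [simp]: "neg_lab (neg_lab e) = e"
  by (simp add: neg_lab_def fun_eq_iff)

lemma shift_upper_rank_mem:
  fixes e :: "'a::{order,finite} \<Rightarrow> 'a \<Rightarrow> int"
  assumes "sign_lab e" and \<sigma>: "\<sigma> \<in> bounded_partitions e N"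
  shows "(\<lambda>x. \<sigma> x + upper_rank e x) \<in> bounded_partitions (neg_lab e) (N + rank e)"
proof -
  let ?\<tau> = "\<lambda>x. \<sigma> x + upper_rank e x"
  have "?\<tau> y \<le> ?\<tau> x \<and> (neg_lab e x y = -1 \<longrightarrow> ?\<tau> y < ?\<tau> x)" if "covers x y" for x y
  proof -
    have "\<sigma> y \<le> \<sigma> x" "e x y = -1 \<Longrightarrow> \<sigma> y < \<sigma> x"
      using \<sigma> that by (auto simp: bounded_partitions_def cover_compatible_def)
    moreover have "e x y = 1 \<or> e x y = -1" using \<open>sign_lab e\<close> by (simp add: sign_lab_def)
    ultimately show ?thesis using upper_rank_cover[OF that, of e] by (auto simp: neg_lab_def)
  qed
  then have compatible: "cover_compatible (neg_lab e) ?\<tau>"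
    by (simp add: cover_compatible_def)
  have "?\<tau> x \<in> {1..N + rank e}" for x
  proof -
    obtain M where M: "x \<le> M" "\<forall>z. \<not> M < z" using ex_maximal_above by blast
    obtain m where m: "m \<le> x" "\<forall>z. \<not> z < m" using ex_minimal_below by blast
    have "?\<tau> M \<le> ?\<tau> x" "?\<tau> x \<le> ?\<tau> m"
      using cover_compatible_antimono[OF compatible] M(1) m(1) by auto
    moreover have "\<sigma> M \<in> {1..N}" "\<sigma> m \<in> {1..N}"
      using \<sigma> by (rule bounded_partitions_values)+
    ultimately show ?thesis
      using upper_rank_maximal[OF M(2), of e] upper_rank_minimal_le[OF m(2), of e] by simp
  qed
  with compatible show ?thesis by (auto simp: bounded_partitions_def)
qed

lemma num_partitions_le_shift_rank:
  fixes e :: "'a::{order,finite} \<Rightarrow> 'a \<Rightarrow> int"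
  assumes "sign_lab e"
  shows "num_partitions e N \<le> num_partitions (neg_lab e) (N + rank e)"
  unfolding num_partitions_def
proof (rule card_inj_on_le)
  show "inj_on (\<lambda>\<sigma> x. \<sigma> x + upper_rank e x) (bounded_partitions e N)"
    by (rule inj_onI) (simp add: fun_eq_iff)
qed (use shift_upper_rank_mem[OF assms] finite_bounded_partitions in auto)

definition upset_card :: "'a::order \<Rightarrow> int" where
  "upset_card x = int (card {z. x \<le> z})"

lemma upset_card_strict_antimono: "x < y \<Longrightarrow> upset_card y < upset_card (x::'a::{order,finite})"
proof -
  assume "x < y"
  then have "{z. y \<le> z} \<subseteq> {z. x \<le> z}" and "x \<notin> {z. y \<le> z}" by auto
  then have "{z. y \<le> z} \<subset> {z. x \<le> z}" by blast
  then show ?thesis by (simp add: upset_card_def psubset_card_mono)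
qed

lemma upset_card_bounds: "upset_card (x::'a::{order,finite}) \<in> {1..int (card (UNIV :: 'a set))}"
proof -
  have "x \<in> {z. x \<le> z}" by simp
  then have "0 < card {z. x \<le> z}" by (auto simp: card_gt_0_iff)
  moreover have "card {z. x \<le> z} \<le> card (UNIV :: 'a set)" by (rule card_mono) auto
  ultimately show ?thesis by (simp add: upset_card_def)
qed

lemma peak_at_minimal:
  fixes m :: "'a::{order,finite}"
  assumes "\<forall>z. \<not> z < m" and "int (card (UNIV :: 'a set)) < K"
  shows "(\<lambda>z. if z = m then K else upset_card z) \<in> bounded_partitions e K"
proof -
  have "(if b = m then K else upset_card b) < (if a = m then K else upset_card a)" if "a < b" for a b
    using that assms upset_card_bounds[of b] upset_card_strict_antimono[OF that] by auto
  moreover have "upset_card z \<in> {1..K}" for z :: 'a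
    using upset_card_bounds[of z] assms(2) by simp
  then have "range (\<lambda>z. if z = m then K else upset_card z) \<subseteq> {1..K}"
    using upset_card_bounds[of m] assms(2) by (auto simp: image_subset_iff)
  ultimately show ?thesis
    by (simp add: bounded_partitions_def strict_antimono_cover_compatible)
qed

lemma num_partitions_strict_mono:
  fixes e :: "'a::{order,finite} \<Rightarrow> 'a \<Rightarrow> int"
  assumes "int (card (UNIV :: 'a set)) \<le> N" and "N < N'"
  shows "num_partitions e N < num_partitions e N'"
proof -
  obtain m :: 'a where m: "\<forall>z. \<not> z < m" using ex_minimal_below by blast
  let ?\<tau> = "\<lambda>z. if z = m then N' else upset_card z"
  have "?\<tau> \<in> bounded_partitions e N'" using peak_at_minimal[OF m] assms by simp
  moreover have "?\<tau> \<notin> bounded_partitions e N"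
    using assms(2) by (auto simp: bounded_partitions_def image_subset_iff)
  ultimately have "bounded_partitions e N \<subset> bounded_partitions e N'"
    using bounded_partitions_mono[of N N' e] assms(2) by auto
  then show ?thesis
    unfolding num_partitions_def by (intro psubset_card_mono finite_bounded_partitions)
qed

lemma tight_cover_witness:
  fixes x y :: "'a::{order,finite}"
  assumes xy: "covers x y" and d: "d \<in> {0, 1}" and K: "2 * int (card (UNIV :: 'a set)) \<le> K"
  obtains \<tau> where "range \<tau> \<subseteq> {1..K}" "\<tau> x = \<tau> y + d"
    "\<And>a b. covers a b \<Longrightarrow> (a, b) \<noteq> (x, y) \<Longrightarrow> \<tau> b < \<tau> a"
proof
  let ?p = "int (card (UNIV :: 'a set))"
  \<comment> \<open>Strictly decreasing along all other covers: lifting everything weakly below \<open>y\<close>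
    by \<open>|P|\<close> makes room to put \<open>x\<close> just \<open>d\<close> above \<open>y\<close>.\<close>
  define \<tau> where "\<tau> z = (if z = x then upset_card y + ?p + d
    else upset_card z + (if z \<le> y then ?p else 0)) + (K - 2 * ?p)" for z
  have "x < y" using xy by (simp add: covers_def)
  then show "\<tau> x = \<tau> y + d" by (simp add: \<tau>_def)
  have "upset_card y < upset_card x" using \<open>x < y\<close> by (rule upset_card_strict_antimono)
  then have "\<tau> z \<in> {1..K}" for z
    using upset_card_bounds[of x] upset_card_bounds[of y] upset_card_bounds[of z] d K
    by (auto simp: \<tau>_def)
  then show "range \<tau> \<subseteq> {1..K}" by auto
  fix a b assume ab: "covers a b" "(a, b) \<noteq> (x, y)"
  then have "a < b" by (simp add: covers_def)
  show "\<tau> b < \<tau> a"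
  proof (cases "a = x")
    case True
    with ab xy have "\<not> b \<le> y" "b \<noteq> x" by (auto simp: covers_def less_le)
    with True show ?thesis using upset_card_bounds[of b] upset_card_bounds[of y] d by (auto simp: \<tau>_def)
  next
    case False
    show ?thesis
    proof (cases "b = x")
      case True
      with \<open>a < b\<close> \<open>x < y\<close> have "a \<le> y" "upset_card y + 2 \<le> upset_card a"
        using upset_card_strict_antimono[of a x] upset_card_strict_antimono[of x y] by auto
      with True False show ?thesis using d by (auto simp: \<tau>_def)
    next
      case False
      then show ?thesis using \<open>a \<noteq> x\<close> \<open>a < b\<close> upset_card_strict_antimono[OF \<open>a < b\<close>]
        by (auto simp: \<tau>_def dest: order.strict_trans1)
    qed
  qed
qed

lemma minimal_defect_not_shifted:
  fixes e :: "'a::{order,finite} \<Rightarrow> 'a \<Rightarrow> int"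
  assumes m: "\<forall>z. \<not> z < m" and defect: "upper_rank e m < rank e"
    and K: "int (card (UNIV :: 'a set)) < N + rank e"
  shows "\<exists>\<tau> \<in> bounded_partitions (neg_lab e) (N + rank e).
    (\<lambda>x. \<tau> x - upper_rank e x) \<notin> bounded_partitions e N"
proof
  let ?\<tau> = "\<lambda>z. if z = m then N + rank e else upset_card z"
  show "?\<tau> \<in> bounded_partitions (neg_lab e) (N + rank e)"
    using peak_at_minimal[OF m K] .
  show "(\<lambda>x. ?\<tau> x - upper_rank e x) \<notin> bounded_partitions e N"
    using bounded_partitions_values[of _ e N m] defect by force
qed

lemma cover_defect_not_shifted:
  fixes e :: "'a::{order,finite} \<Rightarrow> 'a \<Rightarrow> int"
  assumes "sign_lab e" and xy: "covers x y" and defect: "e x y + upper_rank e y < upper_rank e x"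
    and K: "2 * int (card (UNIV :: 'a set)) \<le> N + rank e"
  shows "\<exists>\<tau> \<in> bounded_partitions (neg_lab e) (N + rank e).
    (\<lambda>x. \<tau> x - upper_rank e x) \<notin> bounded_partitions e N"
proof -
  define d :: int where "d = (if e x y = 1 then 1 else 0)"
  have "d \<in> {0, 1}" by (simp add: d_def)
  then obtain \<tau> where \<tau>: "range \<tau> \<subseteq> {1..N + rank e}" "\<tau> x = \<tau> y + d"
    and strict: "\<And>a b :: 'a. covers a b \<Longrightarrow> (a, b) \<noteq> (x, y) \<Longrightarrow> \<tau> b < \<tau> a"
    using tight_cover_witness[OF xy _ K] by blast
  have sign: "e x y = 1 \<or> e x y = -1" using \<open>sign_lab e\<close> by (simp add: sign_lab_def)
  have "\<tau> b \<le> \<tau> a \<and> (neg_lab e a b = -1 \<longrightarrow> \<tau> b < \<tau> a)" if "covers a b" for a b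
  proof (cases "(a, b) = (x, y)")
    case True
    then show ?thesis using \<tau>(2) by (auto simp: d_def neg_lab_def)
  next
    case False
    then show ?thesis using strict[OF that] by simp
  qed
  with \<tau>(1) have "\<tau> \<in> bounded_partitions (neg_lab e) (N + rank e)"
    by (simp add: bounded_partitions_def cover_compatible_def)
  moreover have "(\<lambda>z. \<tau> z - upper_rank e z) \<notin> bounded_partitions e N"
  proof
    assume "(\<lambda>z. \<tau> z - upper_rank e z) \<in> bounded_partitions e N"
    then have "\<tau> y - upper_rank e y \<le> \<tau> x - upper_rank e x"
      and "e x y = -1 \<Longrightarrow> \<tau> y - upper_rank e y < \<tau> x - upper_rank e x"
      using xy by (auto simp: bounded_partitions_def cover_compatible_def)
    then show False using \<tau>(2) defect sign by (auto simp: d_def)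
  qed
  ultimately show ?thesis by blast
qed

lemma num_partitions_less_shift_rank:
  fixes e :: "'a::{order,finite} \<Rightarrow> 'a \<Rightarrow> int"
  assumes "sign_lab e" and "\<not> graded e" and K: "2 * int (card (UNIV :: 'a set)) \<le> N + rank e"
  shows "num_partitions e N < num_partitions (neg_lab e) (N + rank e)"
proof -
  let ?shift = "\<lambda>\<sigma> x. \<sigma> x + upper_rank e x"
  have "0 < card (UNIV :: 'a set)" by (simp add: card_gt_0_iff)
  with K have "int (card (UNIV :: 'a set)) < N + rank e" by linarith
  then obtain \<tau> where \<tau>: "\<tau> \<in> bounded_partitions (neg_lab e) (N + rank e)"
    and not_shifted: "(\<lambda>x. \<tau> x - upper_rank e x) \<notin> bounded_partitions e N"
    using not_graded_defect[OF \<open>\<not> graded e\<close>] minimal_defect_not_shifted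
      cover_defect_not_shifted[OF \<open>sign_lab e\<close> _ _ K] by blast
  have "\<tau> \<notin> ?shift ` bounded_partitions e N"
    using not_shifted by auto
  then have "?shift ` bounded_partitions e N \<subset> bounded_partitions (neg_lab e) (N + rank e)"
    using \<tau> shift_upper_rank_mem[OF assms(1)] by blast
  then have "card (?shift ` bounded_partitions e N) < num_partitions (neg_lab e) (N + rank e)"
    unfolding num_partitions_def by (intro psubset_card_mono finite_bounded_partitions)
  moreover have "inj_on ?shift (bounded_partitions e N)"
    by (rule inj_onI) (simp add: fun_eq_iff)
  ultimately show ?thesis
    by (simp add: num_partitions_def card_image)
qed

lemma rank_bounds_shift:
  fixes e :: "'a::{order,finite} \<Rightarrow> 'a \<Rightarrow> int"
  assumes "sign_lab e"
    and "\<forall>\<^sub>F N in at_top. num_partitions e N = num_partitions (neg_lab e) (N + s)"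
  shows "s \<le> rank e" and "s = rank e \<Longrightarrow> graded e"
proof -
  let ?p = "int (card (UNIV :: 'a set))"
  have "\<forall>\<^sub>F N in at_top. num_partitions e N = num_partitions (neg_lab e) (N + s)
      \<and> 2 * ?p - rank e \<le> N"
    using assms(2) eventually_ge_at_top by (rule eventually_conj)
  then obtain N where N: "num_partitions e N = num_partitions (neg_lab e) (N + s)"
    and "2 * ?p - rank e \<le> N"
    unfolding eventually_at_top_linorder by blast
  then have large: "2 * ?p \<le> N + rank e" by linarith
  show "s \<le> rank e"
  proof (rule ccontr)
    assume "\<not> s \<le> rank e"
    then have "num_partitions (neg_lab e) (N + rank e) < num_partitions (neg_lab e) (N + s)"
      using large by (intro num_partitions_strict_mono) auto
    then show False
      using num_partitions_le_shift_rank[OF assms(1), of N] N by simp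
  qed
  show "graded e" if "s = rank e"
    using num_partitions_less_shift_rank[OF assms(1) _ large] N that by force
qed

section \<open>Polynomiality of the partition count\<close>

definition partitions_onto :: "('a::order \<Rightarrow> 'a \<Rightarrow> int) \<Rightarrow> 'b::order set \<Rightarrow> ('a \<Rightarrow> 'b) set" where
  "partitions_onto e T = {\<tau>. cover_compatible e \<tau> \<and> range \<tau> = T}"

definition num_surj_partitions :: "('a::order \<Rightarrow> 'a \<Rightarrow> int) \<Rightarrow> nat \<Rightarrow> nat" where
  "num_surj_partitions e k = card (partitions_onto e {..<k} :: ('a \<Rightarrow> nat) set)"

lemma finite_partitions_onto:
  "finite T \<Longrightarrow> finite (partitions_onto e T :: ('a::{order,finite} \<Rightarrow> 'b::order) set)"
  unfolding partitions_onto_def by (rule finite_subset[OF _ finite_maps_into[of T]]) auto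

lemma cover_compatible_comp_strict_mono:
  fixes h :: "'b::linorder \<Rightarrow> 'c::linorder"
  assumes "strict_mono_on U h" and "range \<tau> \<subseteq> U"
  shows "cover_compatible e (h \<circ> \<tau>) \<longleftrightarrow> cover_compatible e \<tau>"
  using strict_mono_on_less_eq[OF assms(1)] strict_mono_on_less[OF assms(1)] assms(2)
  by (auto simp: cover_compatible_def image_subset_iff)

lemma card_partitions_onto_strict_mono:
  fixes h :: "'b::linorder \<Rightarrow> 'c::linorder"
  assumes mono: "strict_mono_on U h" and onto: "h ` U = T"
  shows "card (partitions_onto e T :: ('a::order \<Rightarrow> 'c) set) = card (partitions_onto e U)"
proof -
  have inj: "inj_on h U" using mono by (rule strict_mono_on_imp_inj_on)
  have h_inv: "h \<circ> (inv_into U h \<circ> \<rho>) = \<rho>" if "range \<rho> = h ` U" for \<rho> :: "'a \<Rightarrow> 'c"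
    by (rule ext) (metis that comp_apply f_inv_into_f rangeI)
  have "bij_betw (\<lambda>\<tau>. h \<circ> \<tau>) (partitions_onto e U) (partitions_onto e T)"
  proof (rule bij_betw_byWitness[where f' = "\<lambda>\<rho>. inv_into U h \<circ> \<rho>"])
    show "\<forall>\<tau> \<in> partitions_onto e U. inv_into U h \<circ> (h \<circ> \<tau>) = \<tau>"
      using inj by (auto simp: partitions_onto_def fun_eq_iff)
    show "\<forall>\<rho> \<in> partitions_onto e T. h \<circ> (inv_into U h \<circ> \<rho>) = \<rho>"
      using onto h_inv by (simp add: partitions_onto_def)
    show "(\<lambda>\<tau>. h \<circ> \<tau>) ` partitions_onto e U \<subseteq> partitions_onto e T"
      using cover_compatible_comp_strict_mono[OF mono] onto
      by (auto simp: partitions_onto_def image_comp[symmetric])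
    show "(\<lambda>\<rho>. inv_into U h \<circ> \<rho>) ` partitions_onto e T \<subseteq> partitions_onto e U"
    proof clarify
      fix \<rho> assume "\<rho> \<in> partitions_onto e T"
      then have \<rho>: "cover_compatible e \<rho>" "range \<rho> = h ` U"
        using onto by (auto simp: partitions_onto_def)
      then have range: "range (inv_into U h \<circ> \<rho>) = U"
        unfolding image_comp[symmetric] \<rho>(2) using inj by simp
      with \<rho>(1) h_inv[OF \<rho>(2)] show "inv_into U h \<circ> \<rho> \<in> partitions_onto e U"
        using cover_compatible_comp_strict_mono[OF mono, of "inv_into U h \<circ> \<rho>" e]
        by (simp add: partitions_onto_def)
    qed
  qed
  then show ?thesis by (simp add: bij_betw_same_card)
qed

lemma card_partitions_onto:
  fixes e :: "'a::order \<Rightarrow> 'a \<Rightarrow> int" and T :: "int set"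
  assumes "finite T"
  shows "card (partitions_onto e T) = num_surj_partitions e (card T)"
proof -
  let ?xs = "sorted_list_of_set T"
  have "sorted_wrt (<) ?xs" by (rule strict_sorted_list_of_set)
  then have "strict_mono_on {..<card T} ((!) ?xs)"
    using assms by (auto intro!: strict_mono_onI simp: sorted_wrt_nth_less)
  moreover have "(!) ?xs ` {..<card T} = T"
    using bij_betw_nth[of ?xs "{..<card T}" T] assms by (simp add: bij_betw_def)
  ultimately show ?thesis
    unfolding num_surj_partitions_def by (rule card_partitions_onto_strict_mono)
qed

lemma num_surj_partitions_eq_0:
  fixes e :: "'a::{order,finite} \<Rightarrow> 'a \<Rightarrow> int"
  assumes "card (UNIV :: 'a set) < k"
  shows "num_surj_partitions e k = 0"
proof -
  have "range \<tau> \<noteq> {..<k}" for \<tau> :: "'a \<Rightarrow> nat"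
    using card_image_le[of UNIV \<tau>] assms by auto
  then show ?thesis by (simp add: num_surj_partitions_def partitions_onto_def)
qed

lemma sum_Pow_card:
  assumes "finite A"
  shows "(\<Sum>T\<in>Pow A. g (card T)) = (\<Sum>j\<le>card A. of_nat (card A choose j) * g j)"
proof -
  have "(\<Sum>T\<in>Pow A. g (card T)) = (\<Sum>j\<le>card A. \<Sum>T \<in> {T \<in> Pow A. card T = j}. g (card T))"
    using assms by (intro sum.group[symmetric]) (auto intro: card_mono)
  also have "\<dots> = (\<Sum>j\<le>card A. of_nat (card A choose j) * g j)"
    using n_subsets[OF assms] by (intro sum.cong) (auto simp: Pow_def)
  finally show ?thesis .
qed

lemma num_partitions_binomial_sum:
  fixes e :: "'a::{order,finite} \<Rightarrow> 'a \<Rightarrow> int"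
  shows "num_partitions e (int n)
    = (\<Sum>j\<le>card (UNIV :: 'a set). (n choose j) * num_surj_partitions e j)"
proof -
  have "bounded_partitions e (int n) = (\<Union>T\<in>Pow {1..int n}. partitions_onto e T)"
    by (auto simp: bounded_partitions_def partitions_onto_def)
  moreover have "card (\<Union>T\<in>Pow {1..int n}. partitions_onto e T)
      = (\<Sum>T\<in>Pow {1..int n}. card (partitions_onto e T))"
    by (rule card_UN_disjoint) (auto simp: finite_partitions_onto finite_subset, auto simp: partitions_onto_def)
  ultimately have "num_partitions e (int n) = (\<Sum>T\<in>Pow {1..int n}. card (partitions_onto e T))"
    by (simp add: num_partitions_def)
  also have "\<dots> = (\<Sum>T\<in>Pow {1..int n}. num_surj_partitions e (card T))"
    by (intro sum.cong) (auto intro: card_partitions_onto finite_subset)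
  also have "\<dots> = (\<Sum>j\<le>n. (n choose j) * num_surj_partitions e j)"
    by (simp add: sum_Pow_card)
  also have "\<dots> = (\<Sum>j\<le>n + card (UNIV :: 'a set). (n choose j) * num_surj_partitions e j)"
    by (rule sum.mono_neutral_left) auto
  also have "\<dots> = (\<Sum>j\<le>card (UNIV :: 'a set). (n choose j) * num_surj_partitions e j)"
    by (rule sum.mono_neutral_right) (auto simp: num_surj_partitions_eq_0)
  finally show ?thesis .
qed

definition binomial_poly :: "nat \<Rightarrow> real poly" where
  "binomial_poly j = smult (1 / fact j) (\<Prod>i=0..<j. [:- of_nat i, 1:])"

lemma poly_binomial_poly: "poly (binomial_poly j) (real n) = real (n choose j)"
  by (simp add: binomial_poly_def poly_prod binomial_gbinomial gbinomial_prod_rev)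

lemma poly_eqI_nats:
  fixes p q :: "'a::{idom,ring_char_0} poly"
  assumes "\<And>n. 1 \<le> n \<Longrightarrow> poly p (of_nat n) = poly q (of_nat n)"
  shows "p = q"
proof (rule ccontr)
  assume "p \<noteq> q"
  then have "finite {x. poly (p - q) x = 0}" by (intro poly_roots_finite) simp
  moreover have "of_nat ` {1..} \<subseteq> {x. poly (p - q) x = 0}" using assms by auto
  ultimately have "finite (of_nat ` {1::nat..} :: 'a set)" by (rule finite_subset[rotated])
  then show False by (simp add: finite_image_iff infinite_Ici)
qed

lemma poly_Omega:
  fixes e :: "'a::{order,finite} \<Rightarrow> 'a \<Rightarrow> int"
  assumes "1 \<le> N"
  shows "poly (Omega e) (of_int N) = of_nat (num_partitions e N)"
proof -
  define q where "q = (\<Sum>j\<le>card (UNIV :: 'a set). smult (of_nat (num_surj_partitions e j)) (binomial_poly j))"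
  have q: "poly q (real n) = real (Omega_count e n)" for n
    by (simp add: q_def poly_sum poly_binomial_poly Omega_count_eq_num_partitions
        num_partitions_binomial_sum mult.commute)
  have "Omega e = q"
    unfolding Omega_def
  proof (rule the_equality)
    fix q' assume "\<forall>n::nat. 1 \<le> n \<longrightarrow> poly q' (real n) = real (Omega_count e n)"
    then show "q' = q" using q by (intro poly_eqI_nats) simp
  qed (simp add: q)
  then show ?thesis
    using q[of "nat N"] assms by (simp add: Omega_count_eq_num_partitions)
qed

lemma num_partitions_eventually_eq:
  fixes e e' :: "'a::{order,finite} \<Rightarrow> 'a \<Rightarrow> int"
  assumes "\<forall>t::real. poly (Omega e) t = poly (Omega e') (t + of_int s)"
  shows "\<forall>\<^sub>F N in at_top. num_partitions e N = num_partitions e' (N + s)"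
  using eventually_ge_at_top[of "max 1 (1 - s)"]
proof eventually_elim
  case (elim N)
  then have "real (num_partitions e N) = poly (Omega e') (of_int N + of_int s)"
    using poly_Omega[of N e] assms by simp
  also have "\<dots> = real (num_partitions e' (N + s))"
    using poly_Omega[of "N + s" e'] elim by simp
  finally show ?case by simp
qed

theorem corollary7p4:
  fixes \<omega> :: "'a::{order,finite} \<Rightarrow> nat" and s :: int
  assumes "bij_betw \<omega> UNIV {1..card (UNIV :: 'a set)}"
    and "\<forall>t::real. poly (Omega (eps_of \<omega>)) t = poly (Omega (neg_lab (eps_of \<omega>))) (t + of_int s)"
  shows "- rank (neg_lab (eps_of \<omega>)) \<le> s \<and> s \<le> rank (eps_of \<omega>)
    \<and> (s = rank (eps_of \<omega>) \<longleftrightarrow> graded (eps_of \<omega>))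
    \<and> (s = - rank (neg_lab (eps_of \<omega>)) \<longleftrightarrow> graded (eps_of \<omega>))"
proof -
  let ?\<epsilon> = "eps_of \<omega>"
  have sign: "sign_lab ?\<epsilon>" by (rule sign_lab_eps_of)
  have "\<forall>\<^sub>F N in at_top. num_partitions ?\<epsilon> N = num_partitions (neg_lab ?\<epsilon>) (N + s)"
    using assms(2) by (rule num_partitions_eventually_eq)
  note upper = rank_bounds_shift[OF sign this]
  have "poly (Omega (neg_lab ?\<epsilon>)) t = poly (Omega (neg_lab (neg_lab ?\<epsilon>))) (t + of_int (- s))" for t
    using assms(2)[rule_format, of "t - of_int s"] by simp
  then have "\<forall>\<^sub>F N in at_top. num_partitions (neg_lab ?\<epsilon>) N = num_partitions (neg_lab (neg_lab ?\<epsilon>)) (N + - s)"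
    by (intro num_partitions_eventually_eq allI)
  note lower = rank_bounds_shift[OF sign_lab_neg_lab[OF sign] this]
  have "- rank (neg_lab ?\<epsilon>) \<le> s" using lower(1) by simp
  moreover have "graded ?\<epsilon>" if "s = - rank (neg_lab ?\<epsilon>)"
    using lower(2) that by (simp add: graded_neg_lab_iff)
  moreover have "s = rank ?\<epsilon> \<and> s = - rank (neg_lab ?\<epsilon>)" if "graded ?\<epsilon>"
    using upper(1) lower(1) rank_neg_lab_graded[OF that] by simp
  ultimately show ?thesis using upper by blast
qed

end
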